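(* Let $\tau$ be a $T_1$-topology on $\mathcal{C}(p,q)$ such that $(\mathcal{C}(p,q),\tau)$ is a semitopological semigroup. If there exists a point $q^ip^j\in\mathcal{C}(p,q)$ such that the subspace $\updownarrow_{\preceq}q^ip^j$ is semiregular at $q^ip^j$, then for every point $q^mp^n\in\mathcal{C}(p,q)$ the subspace $\updownarrow_{\preceq}q^mp^n$ is semiregular at $q^mp^n$.
   Context: The bicyclic monoid $\mathcal{C}(p,q)$ is the monoid generated by $p,q$ subject only to $pq=1$; elements are uniquely $q^ip^j$, $i,j\in\omega$, with multiplication $q^kp^l\cdot q^mp^n = q^{k-l+m}p^n$ if $l<m$, $=q^kp^n$ if $l=m$, $=q^kp^{l-m+n}$ if $l>m$. Natural partial order: $q^ip^j\preceq q^sp^t$ iff $i\ge s$ and $i-j=s-t$; $\updownarrow_{\preceq}x=\{y:x\preceq y\}\cup\{y:y\preceq x\}$. Semitopological semigroup: multiplication separately continuous. A subspace $Y$ is semiregular at $x\in Y$ if $x$ has a neighbourhood base in $Y$ of sets $U$ with $U=\mathrm{int}_Y(\mathrm{cl}_Y(U))$. *)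

theory Defs
  imports "HOL-Analysis.Analysis"
begin

text \<open>The bicyclic monoid C(p,q): the element q^i p^j is represented by the pair (i,j).\<close>

definition bc_mult :: "nat \<times> nat \<Rightarrow> nat \<times> nat \<Rightarrow> nat \<times> nat" where
  "bc_mult x y = (case x of (k,l) \<Rightarrow> case y of (m,n) \<Rightarrow>
      if l < m then (k + m - l, n)
      else if l = m then (k, n)
      else (k, l - m + n))"

definition bc_le :: "nat \<times> nat \<Rightarrow> nat \<times> nat \<Rightarrow> bool" where
  "bc_le x y = (case x of (i,j) \<Rightarrow> case y of (s,t) \<Rightarrow>
      i \<ge> s \<and> int i - int j = int s - int t)"

definition bc_updown :: "nat \<times> nat \<Rightarrow> (nat \<times> nat) set" where
  "bc_updown x = {y. bc_le x y} \<union> {y. bc_le y x}"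

definition semitopological_bc :: "(nat \<times> nat) topology \<Rightarrow> bool" where
  "semitopological_bc X \<longleftrightarrow> topspace X = UNIV \<and>
     (\<forall>a. continuous_map X X (\<lambda>x. bc_mult a x) \<and> continuous_map X X (\<lambda>x. bc_mult x a))"

definition semiregular_at :: "'a topology \<Rightarrow> 'a set \<Rightarrow> 'a \<Rightarrow> bool" where
  "semiregular_at X Y x \<longleftrightarrow> x \<in> Y \<and>
     (\<forall>W. openin (subtopology X Y) W \<and> x \<in> W \<longrightarrow>
        (\<exists>U. openin (subtopology X Y) U \<and> x \<in> U \<and> U \<subseteq> W \<and>
             U = (subtopology X Y) interior_of ((subtopology X Y) closure_of U)))"

end

theory Submission
  imports Defs
begin

text \<open>
  The subspace \<open>\<updownarrow>(i,j)\<close> is the chain \<open>{(s,t). s - t = i - j}\<close>; each of its points has only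
  finitely many points of the chain below it, and finite sets are closed since the topology is
  \<open>T\<^sub>1\<close>. So a point of a chain is isolated in it as soon as some open set of the monoid meets the
  chain in a finite set around it.

  Semiregularity at \<open>(i,j)\<close> forces \<open>(i,j)\<close> to be isolated in its chain: otherwise the left
  translation by the idempotent \<open>(s,s)\<close>, which fixes the chain above level \<open>s\<close> and sends \<open>(i,j)\<close>
  to the chain point of level \<open>s\<close>, shows that every neighbourhood of \<open>(i,j)\<close> in the chain is dense
  in the cofinite part above \<open>i\<close>, so no regular open neighbourhood of \<open>(i,j)\<close> can omit a point
  there. Being isolated then transfers from \<open>(i,j)\<close> to any \<open>(m,n)\<close> through the continuous map
  \<open>w \<mapsto> (i,m) w (n,j)\<close>, which sends the part of the chain of \<open>(m,n)\<close> up to level \<open>m\<close> to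
  \<open>(i,j)\<close> and the rest of that chain to other points of the chain of \<open>(i,j)\<close>. Finally an isolated
  point of a \<open>T\<^sub>1\<close> subspace is trivially a point of semiregularity.
\<close>

lemma openin_subtopology_singleton_if_finite_nbhd:
  assumes "t1_space X" "openin X N" "x \<in> N" "x \<in> Y" "finite (N \<inter> Y)"
  shows "openin (subtopology X Y) {x}"
proof -
  let ?Z = "subtopology X Y"
  have "openin ?Z (N \<inter> Y)"
    using assms(2) openin_subtopology_Int by blast
  moreover have "closedin ?Z (N \<inter> Y - {x})"
  proof -
    have "t1_space ?Z"
      using assms(1) by (rule t1_space_subtopology)
    moreover have "N \<inter> Y - {x} \<subseteq> topspace ?Z"
      using openin_subset[OF assms(2)] by auto
    ultimately show ?thesis
      using assms(5) t1_space_closedin_finite by blast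
  qed
  ultimately have "openin ?Z (N \<inter> Y - (N \<inter> Y - {x}))"
    by (rule openin_diff)
  moreover have "N \<inter> Y - (N \<inter> Y - {x}) = {x}"
    using assms(3,4) by blast
  ultimately show ?thesis
    by simp
qed

lemma semiregular_at_if_openin_singleton:
  assumes "t1_space X" "x \<in> Y" "openin (subtopology X Y) {x}"
  shows "semiregular_at X Y x"
proof -
  let ?Z = "subtopology X Y"
  have "x \<in> topspace ?Z"
    using openin_subset[OF assms(3)] by blast
  then have "?Z closure_of {x} = {x}"
    using closure_of_singleton[OF t1_space_subtopology[OF assms(1)]] by simp
  then have "{x} = ?Z interior_of (?Z closure_of {x})"
    using assms(3) by (simp add: interior_of_openin)
  then show ?thesis
    using assms(2,3) unfolding semiregular_at_def by blast
qed

lemma bc_updown_eq: "bc_updown (i, j) = {(s, t). int s - int t = int i - int j}"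
  unfolding bc_updown_def bc_le_def by auto

lemma finite_bc_updown_fst_le: "finite {x \<in> bc_updown (i, j). fst x \<le> s}"
proof (rule finite_subset)
  show "{x \<in> bc_updown (i, j). fst x \<le> s} \<subseteq> {..s} \<times> {..s + j}"
    unfolding bc_updown_eq by auto
qed simp

lemma bc_mult_idempotent_fixes: "m \<le> a \<Longrightarrow> bc_mult (m, m) (a, b) = (a, b)"
  unfolding bc_mult_def by auto

lemma bc_mult_idempotent_lifts:
  "i \<le> s \<Longrightarrow> int s - int t = int i - int j \<Longrightarrow> bc_mult (s, s) (i, j) = (s, t)"
  unfolding bc_mult_def by auto

lemma bc_mult_sandwich_bc_updown:
  assumes "w \<in> bc_updown (m, n)"
  shows "bc_mult (bc_mult (i, m) w) (n, j) \<in> bc_updown (i, j)"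
    and "bc_mult (bc_mult (i, m) w) (n, j) = (i, j) \<longleftrightarrow> fst w \<le> m"
  using assms unfolding bc_updown_eq bc_mult_def by (auto split: prod.splits)

context
  fixes X :: "(nat \<times> nat) topology"
  assumes t1: "t1_space X" and semitop: "semitopological_bc X"
begin

lemma topspace_bc: "topspace X = UNIV"
  using semitop unfolding semitopological_bc_def by blast

lemma continuous_map_bc_mult_left: "continuous_map X X (bc_mult a)"
  using semitop unfolding semitopological_bc_def by (metis (no_types))

lemma continuous_map_bc_mult_right: "continuous_map X X (\<lambda>x. bc_mult x a)"
  using semitop unfolding semitopological_bc_def by blast

lemma openin_bc_preimage: "continuous_map X X f \<Longrightarrow> openin X V \<Longrightarrow> openin X {x. f x \<in> V}"
  using openin_continuous_map_preimage[of X X f V] by (simp add: topspace_bc)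

lemma openin_bc_updown_diff_finite:
  assumes "finite F"
  shows "openin (subtopology X (bc_updown x)) (bc_updown x - F)"
proof -
  let ?Z = "subtopology X (bc_updown x)"
  have "closedin ?Z (F \<inter> bc_updown x)"
    using t1_space_subtopology[OF t1] assms
    by (simp add: t1_space_closedin_finite topspace_bc)
  then have "openin ?Z (topspace ?Z - F \<inter> bc_updown x)"
    by (rule openin_diff[OF openin_topspace])
  moreover have "topspace ?Z - F \<inter> bc_updown x = bc_updown x - F"
    by (auto simp: topspace_bc)
  ultimately show ?thesis
    by simp
qed

lemma bc_updown_upper_in_closure_of:
  assumes not_isolated: "\<not> openin (subtopology X (bc_updown (i, j))) {(i, j)}"
    and U: "openin (subtopology X (bc_updown (i, j))) U" "(i, j) \<in> U"
    and w: "w \<in> bc_updown (i, j)" "i < fst w"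
  shows "w \<in> subtopology X (bc_updown (i, j)) closure_of U"
proof -
  let ?Y = "bc_updown (i, j)"
  obtain G where G: "openin X G" "U = G \<inter> ?Y"
    using U(1) openin_subtopology by metis
  obtain s t where w_eq: "w = (s, t)" by force
  have i_s: "i < s" and diag: "int s - int t = int i - int j"
    using w w_eq bc_updown_eq by auto
  have "\<exists>y. y \<in> U \<and> y \<in> T" if T: "w \<in> T" "openin (subtopology X ?Y) T" for T
  proof (rule ccontr)
    assume disjoint: "\<not> (\<exists>y. y \<in> U \<and> y \<in> T)"
    obtain V where V: "openin X V" "T = V \<inter> ?Y"
      using T(2) openin_subtopology by metis
    define N where "N = G \<inter> {x. bc_mult (s, s) x \<in> V}"
    have "openin X N"
      unfolding N_def using G(1) V(1) openin_bc_preimage[OF continuous_map_bc_mult_left] by blast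
    moreover have "(i, j) \<in> N"
      using U G T V bc_mult_idempotent_lifts[OF less_imp_le[OF i_s] diag] w_eq
      unfolding N_def by auto
    moreover have "N \<inter> ?Y \<subseteq> {x \<in> ?Y. fst x \<le> s}"
    proof
      fix x assume x: "x \<in> N \<inter> ?Y"
      have "\<not> s \<le> fst x"
      proof
        assume "s \<le> fst x"
        then have "bc_mult (s, s) x = x"
          using bc_mult_idempotent_fixes by (metis prod.collapse)
        then have "x \<in> U \<and> x \<in> T"
          using x G(2) V(2) unfolding N_def by auto
        with disjoint show False
          by blast
      qed
      then show "x \<in> {x \<in> ?Y. fst x \<le> s}"
        using x by auto
    qed
    then have "finite (N \<inter> ?Y)"
      using finite_bc_updown_fst_le finite_subset by blast
    ultimately show False
      using not_isolated openin_subtopology_singleton_if_finite_nbhd[OF t1] U(2) G by blast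
  qed
  then show ?thesis
    using w topspace_bc unfolding in_closure_of by auto
qed

lemma bc_openin_singleton_if_semiregular_at:
  assumes "semiregular_at X (bc_updown (i, j)) (i, j)"
  shows "openin (subtopology X (bc_updown (i, j))) {(i, j)}"
proof (rule ccontr)
  assume not_isolated: "\<not> openin (subtopology X (bc_updown (i, j))) {(i, j)}"
  let ?Y = "bc_updown (i, j)" and ?Z = "subtopology X (bc_updown (i, j))"
  define z where "z = (i + 1, j + 1)"
  have z: "z \<in> ?Y" "(i, j) \<noteq> z"
    unfolding z_def bc_updown_eq by auto
  have "openin ?Z (?Y - {z})"
    using openin_bc_updown_diff_finite by blast
  moreover have "(i, j) \<in> ?Y - {z}"
    using z unfolding bc_updown_eq by auto
  ultimately obtain U where U: "openin ?Z U" "(i, j) \<in> U" "U \<subseteq> ?Y - {z}"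
    "U = ?Z interior_of (?Z closure_of U)"
    using assms unfolding semiregular_at_def by blast
  define upper where "upper = ?Y - {x \<in> ?Y. fst x \<le> i}"
  have "openin ?Z upper"
    unfolding upper_def using openin_bc_updown_diff_finite finite_bc_updown_fst_le by blast
  moreover have "upper \<subseteq> ?Z closure_of U"
  proof
    fix x assume "x \<in> upper"
    then have "x \<in> ?Y" "i < fst x"
      unfolding upper_def by auto
    then show "x \<in> ?Z closure_of U"
      by (rule bc_updown_upper_in_closure_of[OF not_isolated U(1,2)])
  qed
  ultimately have "upper \<subseteq> U"
    using interior_of_maximal U(4) by blast
  moreover have "z \<in> upper"
    using z unfolding upper_def z_def by auto
  ultimately show False
    using U(3) by auto
qed

lemma bc_openin_singleton_transfer:
  assumes "openin (subtopology X (bc_updown (i, j))) {(i, j)}"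
  shows "openin (subtopology X (bc_updown (m, n))) {(m, n)}"
proof -
  let ?Y = "bc_updown (m, n)" and ?h = "\<lambda>w. bc_mult (bc_mult (i, m) w) (n, j)"
  obtain G where G: "openin X G" "{(i, j)} = G \<inter> bc_updown (i, j)"
    using assms openin_subtopology by metis
  define N where "N = {w. ?h w \<in> G}"
  have N_open: "openin X N"
    unfolding N_def
    using G(1) openin_bc_preimage[OF continuous_map_compose[OF continuous_map_bc_mult_left
          continuous_map_bc_mult_right]]
    by (simp add: o_def)
  have G_on_chain: "x \<in> G \<longleftrightarrow> x = (i, j)" if "x \<in> bc_updown (i, j)" for x
    using G(2) that by auto
  have N_on_chain: "w \<in> N \<longleftrightarrow> fst w \<le> m" if "w \<in> ?Y" for w
    unfolding N_def mem_Collect_eq G_on_chain[OF bc_mult_sandwich_bc_updown(1)[OF that]]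
    by (rule bc_mult_sandwich_bc_updown(2)[OF that])
  have "N \<inter> ?Y = {w \<in> ?Y. fst w \<le> m}"
    using N_on_chain by auto
  then have N_Y_finite: "finite (N \<inter> ?Y)"
    using finite_bc_updown_fst_le by simp
  have mn_Y: "(m, n) \<in> ?Y"
    unfolding bc_updown_eq by simp
  then have "(m, n) \<in> N"
    using N_on_chain by simp
  from this N_Y_finite show ?thesis
    by (rule openin_subtopology_singleton_if_finite_nbhd[OF t1 N_open _ mn_Y])
qed

end

theorem lemma5:
  fixes X :: "(nat \<times> nat) topology"
  assumes "t1_space X"
    and "semitopological_bc X"
    and "\<exists>i j. semiregular_at X (bc_updown (i, j)) (i, j)"
  shows "\<forall>m n. semiregular_at X (bc_updown (m, n)) (m, n)"
proof (intro allI)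
  fix m n
  obtain i j where "semiregular_at X (bc_updown (i, j)) (i, j)"
    using assms(3) by blast
  then have "openin (subtopology X (bc_updown (i, j))) {(i, j)}"
    by (rule bc_openin_singleton_if_semiregular_at[OF assms(1,2)])
  then have "openin (subtopology X (bc_updown (m, n))) {(m, n)}"
    by (rule bc_openin_singleton_transfer[OF assms(1,2)])
  moreover have "(m, n) \<in> bc_updown (m, n)"
    unfolding bc_updown_eq by simp
  ultimately show "semiregular_at X (bc_updown (m, n)) (m, n)"
    using semiregular_at_if_openin_singleton[OF assms(1)] by blast
qed

end
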